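(* Let $A$ be a real $2\times 2$ matrix and $B$ a real $1\times 2$ matrix, and let $\mathrm{NT}=\{\vec{x}\in\mathbb{R}^2 : BA^k\vec{x}>0 \text{ for all integers } k\ge 0\}$. If the topological boundary $\partial\mathrm{NT}$ is composed of two rays $l_1=\{k\vec{v}_1:k\ge 0\}$ and $l_2=\{k\vec{v}_2:k\ge0\}$ starting from the origin (with $\vec{v}_1,\vec{v}_2$ nonzero and not positive multiples of each other), then $l_1$ or $l_2$ is contained in the line $\{\vec{x}: B\vec{x}=0\}$.
   Context: $\mathrm{NT}$ is the non-termination set of the loop "while $(B\vec{x}>0)$ $\{\vec{x}:=A\vec{x}\}$". *)

theory Defs
  imports "HOL-Analysis.Analysis"
begin

primrec mpow :: "real^2^2 \<Rightarrow> nat \<Rightarrow> real^2^2" where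
  "mpow A 0 = mat 1"
| "mpow A (Suc k) = A ** mpow A k"

text \<open>Non-termination set of the loop  while (B x > 0) { x := A x },
  where the 1x2 matrix B is represented by its single row b, so that B x = b \<bullet> x.\<close>
definition NT :: "real^2^2 \<Rightarrow> real^2 \<Rightarrow> (real^2) set" where
  "NT A b = {x. \<forall>k::nat. b \<bullet> (mpow A k *v x) > 0}"

definition ray :: "real^2 \<Rightarrow> (real^2) set" where
  "ray v = {k *\<^sub>R v | k. k \<ge> 0}"

end

theory Submission
  imports Defs
begin

(* Suppose neither ray lies in the line b.x = 0.  Since NT lies in the open
   half-plane b.x > 0, its closure lies in b.x >= 0, so b.v1 > 0 and b.v2 > 0, and the
   hypothesis on v1, v2 makes them a basis of R^2.  A point v of the frontier with b.v > 0
   is mapped by A into the frontier again (the loop runs one step from it), so A v1 and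
   A v2 again lie on the two rays.  Up to exchanging v1 and v2 this leaves three shapes of A:
   diagonal in the basis v1, v2; A^2 = s A; or A^2 = s t I.  In the diagonal case the
   dominant eigenvector v1 is interior to NT, since b.(A^k x) has the sign of the dominant
   coordinate of x.  In the other cases A satisfies A^2 = c1 A + c0 I with c0, c1 >= 0, so
   positivity of b.x and b.(A x) already forces x into NT; this open condition holds at v1
   or v2.  In every case some v_i is interior to NT, contradicting v_i in the frontier. *)

lemma mpow_0_apply [simp]: "mpow A 0 *v x = x"
  by (simp add: matrix_vector_mul_lid)

lemma mpow_Suc_apply: "mpow A (Suc k) *v x = A *v (mpow A k *v x)"
  by (simp add: matrix_vector_mul_assoc)

text \<open>Powers commute with A; this lets NT be unfolded by one loop iteration.\<close>
lemma mpow_Suc_right: "mpow A (Suc k) = mpow A k ** A"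
proof (induction k)
  case 0
  then show ?case by (simp add: matrix_mul_rid matrix_mul_lid)
next
  case (Suc k)
  have "mpow A (Suc (Suc k)) = A ** (mpow A k ** A)" using Suc by simp
  also have "\<dots> = mpow A (Suc k) ** A" by (simp add: matrix_mul_assoc)
  finally show ?case .
qed

lemma mpow_Suc_apply_right: "mpow A (Suc k) *v x = mpow A k *v (A *v x)"
  by (simp only: mpow_Suc_right matrix_vector_mul_assoc)

lemma mpow_eigenvector: "A *v v = s *\<^sub>R v \<Longrightarrow> mpow A k *v v = (s ^ k) *\<^sub>R v"
  by (induction k) (simp_all add: mpow_Suc_apply matrix_vector_mult_scaleR del: mpow.simps(2))

lemma isCont_matrix_vector: "isCont (\<lambda>x. (A::real^2^2) *v x) x"
  by (simp add: linear_continuous_at matrix_vector_mul_linear)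

lemma NT_step: "x \<in> NT A b \<longleftrightarrow> 0 < b \<bullet> x \<and> A *v x \<in> NT A b"
proof -
  have "(\<forall>k. 0 < b \<bullet> (mpow A k *v x)) \<longleftrightarrow>
        0 < b \<bullet> (mpow A 0 *v x) \<and> (\<forall>k. 0 < b \<bullet> (mpow A (Suc k) *v x))"
    by (metis not0_implies_Suc)
  then show ?thesis by (simp add: NT_def mpow_Suc_apply_right del: mpow.simps(2))
qed

lemma NT_guard: "x \<in> NT A b \<Longrightarrow> 0 < b \<bullet> x"
  using NT_step by blast

lemma NT_invariant: "x \<in> NT A b \<Longrightarrow> A *v x \<in> NT A b"
  using NT_step by blast

lemma closure_NT_nonneg: "x \<in> closure (NT A b) \<Longrightarrow> 0 \<le> b \<bullet> x"
proof -
  have "NT A b \<subseteq> {x. 0 \<le> b \<bullet> x}" using NT_guard by fastforce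
  then have "closure (NT A b) \<subseteq> {x. 0 \<le> b \<bullet> x}"
    by (rule closure_minimal[OF _ closed_halfspace_ge])
  then show "x \<in> closure (NT A b) \<Longrightarrow> 0 \<le> b \<bullet> x" by blast
qed

lemma frontier_NT_step:
  assumes "0 < b \<bullet> v" and "v \<in> frontier (NT A b)"
  shows "A *v v \<in> frontier (NT A b)"
proof -
  have "A *v v \<in> (\<lambda>x. A *v x) ` closure (NT A b)"
    using assms(2) by (simp add: frontier_def)
  also have "\<dots> \<subseteq> closure ((\<lambda>x. A *v x) ` NT A b)"
    by (rule continuous_image_closure_subset[where A=UNIV])
       (auto intro: continuous_at_imp_continuous_on isCont_matrix_vector)
  also have "\<dots> \<subseteq> closure (NT A b)"
    by (rule closure_mono) (use NT_invariant in blast)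
  finally have in_closure: "A *v v \<in> closure (NT A b)" .
  have "A *v v \<notin> interior (NT A b)"
  proof
    assume interior: "A *v v \<in> interior (NT A b)"
    let ?U = "{x. 0 < b \<bullet> x} \<inter> (\<lambda>x. A *v x) -` interior (NT A b)"
    have "open ?U"
      by (intro open_Int open_halfspace_gt continuous_open_vimage open_interior)
         (auto intro: isCont_matrix_vector)
    moreover have "v \<in> ?U" using interior assms(1) by simp
    moreover have "?U \<subseteq> NT A b"
      using NT_step[of _ A b] interior_subset[of "NT A b"] by auto
    ultimately have "v \<in> interior (NT A b)" by (meson interiorI)
    then show False using assms(2) by (simp add: frontier_def)
  qed
  then show ?thesis using in_closure by (simp add: frontier_def)
qed

section \<open>Sufficient conditions for interior points\<close>

lemma NT_empty_if_square_zero: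
  assumes "\<forall>y. A *v (A *v y) = 0"
  shows "NT A b = {}"
proof -
  have "b \<bullet> (mpow A 2 *v x) = 0" for x
    using assms by (simp add: numeral_2_eq_2 mpow_Suc_apply del: mpow.simps(2))
  then show ?thesis unfolding NT_def by (auto intro!: exI[where x=2])
qed

lemma relation_nondegenerate:
  assumes "NT A b \<noteq> {}"
    and rel: "\<forall>y. A *v (A *v y) = c1 *\<^sub>R (A *v y) + c0 *\<^sub>R y"
    and "0 \<le> c0" "0 \<le> c1"
  shows "0 < c0 + c1"
proof (rule ccontr)
  assume "\<not> 0 < c0 + c1"
  then have "c0 = 0" "c1 = 0" using assms(3,4) by linarith+
  then have "\<forall>y. A *v (A *v y) = 0" using rel by simp
  then show False using NT_empty_if_square_zero assms(1) by blast
qed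

text \<open>If A^2 = c1 A + c0 I with nonnegative, not both zero coefficients, the guard values
  along an orbit obey a recurrence with nonnegative coefficients, so two consecutive
  positive values keep all of them positive.\<close>
lemma NT_two_step:
  assumes rel: "\<forall>y. A *v (A *v y) = c1 *\<^sub>R (A *v y) + c0 *\<^sub>R y"
    and "0 \<le> c0" "0 \<le> c1" "0 < c0 + c1"
    and "0 < b \<bullet> x" "0 < b \<bullet> (A *v x)"
  shows "x \<in> NT A b"
proof -
  have "0 < b \<bullet> (mpow A m *v x) \<and> 0 < b \<bullet> (mpow A (Suc m) *v x)" for m
  proof (induction m)
    case 0
    then show ?case using assms(5,6) by simp
  next
    case (Suc m)
    have "mpow A (Suc (Suc m)) *v x
        = c1 *\<^sub>R (mpow A (Suc m) *v x) + c0 *\<^sub>R (mpow A m *v x)"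
      using rel by (simp only: mpow_Suc_apply)
    then have "b \<bullet> (mpow A (Suc (Suc m)) *v x)
        = c1 * (b \<bullet> (mpow A (Suc m) *v x)) + c0 * (b \<bullet> (mpow A m *v x))"
      by (simp add: inner_add_right)
    moreover have "0 < c1 * (b \<bullet> (mpow A (Suc m) *v x)) + c0 * (b \<bullet> (mpow A m *v x))"
      using Suc.IH assms(2-4) by (smt (verit) mult_nonneg_nonneg mult_pos_pos)
    ultimately show ?case using Suc.IH by simp
  qed
  then show ?thesis unfolding NT_def by blast
qed

lemma two_step_interior:
  assumes "NT A b \<noteq> {}"
    and rel: "\<forall>y. A *v (A *v y) = c1 *\<^sub>R (A *v y) + c0 *\<^sub>R y"
    and "0 \<le> c0" "0 \<le> c1"
    and "0 < b \<bullet> x" "0 < b \<bullet> (A *v x)"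
  shows "x \<in> interior (NT A b)"
proof -
  have "0 < c0 + c1" using relation_nondegenerate assms(1-4) by blast
  let ?U = "{x. 0 < b \<bullet> x} \<inter> (\<lambda>x. A *v x) -` {x. 0 < b \<bullet> x}"
  have "open ?U"
    by (intro open_Int open_halfspace_gt continuous_open_vimage)
       (auto intro: isCont_matrix_vector)
  moreover have "x \<in> ?U" using assms(5,6) by simp
  moreover have "?U \<subseteq> NT A b"
    using NT_two_step[OF rel assms(3,4) \<open>0 < c0 + c1\<close>] by blast
  ultimately show ?thesis by (meson interiorI)
qed

section \<open>Coordinates with respect to a basis of the plane\<close>

definition dual_basis :: "real^2 \<Rightarrow> real^2 \<Rightarrow> real^2 \<Rightarrow> real^2 \<Rightarrow> bool" where
  "dual_basis v1 v2 p q \<longleftrightarrow> (\<forall>x. x = (p \<bullet> x) *\<^sub>R v1 + (q \<bullet> x) *\<^sub>R v2)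
     \<and> p \<bullet> v1 = 1 \<and> p \<bullet> v2 = 0 \<and> q \<bullet> v1 = 0 \<and> q \<bullet> v2 = 1"

lemma dual_basis_swap: "dual_basis v1 v2 p q \<Longrightarrow> dual_basis v2 v1 q p"
  unfolding dual_basis_def by (simp add: add.commute)

text \<open>Two vectors with nonzero determinant admit a dual basis (Cramer's rule).\<close>
lemma dual_basis_exists:
  fixes v1 v2 :: "real^2"
  assumes "v1$1 * v2$2 - v1$2 * v2$1 \<noteq> 0"
  shows "\<exists>p q. dual_basis v1 v2 p q"
proof -
  define d where "d = v1$1 * v2$2 - v1$2 * v2$1"
  have d: "d \<noteq> 0" using assms d_def by simp
  define p :: "real^2" where "p = vector [v2$2/d, - v2$1/d]"
  define q :: "real^2" where "q = vector [- v1$2/d, v1$1/d]"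
  have p: "p \<bullet> x = (x$1 * v2$2 - x$2 * v2$1) / d" for x
    using d by (simp add: p_def inner_vec_def sum_2 field_simps)
  have q: "q \<bullet> x = (v1$1 * x$2 - v1$2 * x$1) / d" for x
    using d by (simp add: q_def inner_vec_def sum_2 field_simps)
  have "x = (p \<bullet> x) *\<^sub>R v1 + (q \<bullet> x) *\<^sub>R v2" for x
  proof -
    have "((p \<bullet> x) *\<^sub>R v1 + (q \<bullet> x) *\<^sub>R v2)$i
        = ((x$1 * v2$2 - x$2 * v2$1) * v1$i + (v1$1 * x$2 - v1$2 * x$1) * v2$i) / d" for i
      by (simp add: p q add_divide_distrib)
    moreover have "((x$1 * v2$2 - x$2 * v2$1) * v1$1 + (v1$1 * x$2 - v1$2 * x$1) * v2$1) = x$1 * d"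
      and "((x$1 * v2$2 - x$2 * v2$1) * v1$2 + (v1$1 * x$2 - v1$2 * x$1) * v2$2) = x$2 * d"
      by (simp_all add: d_def algebra_simps)
    ultimately show ?thesis unfolding vec_eq_iff forall_2 using d by simp
  qed
  moreover have "p \<bullet> v1 = 1 \<and> p \<bullet> v2 = 0 \<and> q \<bullet> v1 = 0 \<and> q \<bullet> v2 = 1"
    using d unfolding p q by (simp add: d_def algebra_simps)
  ultimately show ?thesis unfolding dual_basis_def by blast
qed

lemma parallel_if_det_zero:
  fixes v1 v2 :: "real^2"
  assumes "v2 \<noteq> 0" and "v1$1 * v2$2 - v1$2 * v2$1 = 0"
  shows "\<exists>c. v1 = c *\<^sub>R v2"
proof (cases "v2$1 = 0")
  case False
  then have "v1 = (v1$1 / v2$1) *\<^sub>R v2"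
    using assms(2) unfolding vec_eq_iff forall_2 by (simp add: field_simps)
  then show ?thesis by blast
next
  case True
  then have "v2$2 \<noteq> 0" using assms(1) by (auto simp: vec_eq_iff forall_2)
  then have "v1 = (v1$2 / v2$2) *\<^sub>R v2"
    using True assms(2) unfolding vec_eq_iff forall_2 by (simp add: field_simps)
  then show ?thesis by blast
qed

lemma dual_basis_linear:
  assumes "dual_basis v1 v2 p q"
  shows "A *v y = (p \<bullet> y) *\<^sub>R (A *v v1) + (q \<bullet> y) *\<^sub>R (A *v v2)"
proof -
  have "A *v y = A *v ((p \<bullet> y) *\<^sub>R v1 + (q \<bullet> y) *\<^sub>R v2)"
    using assms unfolding dual_basis_def by metis
  then show ?thesis by (simp add: matrix_vector_right_distrib matrix_vector_mult_scaleR)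
qed

lemma quadratic_relation_from_basis:
  assumes "dual_basis v1 v2 p q"
    and "A *v (A *v v1) = c1 *\<^sub>R (A *v v1) + c0 *\<^sub>R v1"
    and "A *v (A *v v2) = c1 *\<^sub>R (A *v v2) + c0 *\<^sub>R v2"
  shows "\<forall>y. A *v (A *v y) = c1 *\<^sub>R (A *v y) + c0 *\<^sub>R y"
proof
  fix y
  have "A *v (A *v y) = (p \<bullet> y) *\<^sub>R (A *v (A *v v1)) + (q \<bullet> y) *\<^sub>R (A *v (A *v v2))"
    using dual_basis_linear[OF assms(1), of A y]
    by (simp add: matrix_vector_right_distrib matrix_vector_mult_scaleR)
  also have "\<dots> = c1 *\<^sub>R ((p \<bullet> y) *\<^sub>R (A *v v1) + (q \<bullet> y) *\<^sub>R (A *v v2))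
                  + c0 *\<^sub>R ((p \<bullet> y) *\<^sub>R v1 + (q \<bullet> y) *\<^sub>R v2)"
    using assms(2,3) by (simp add: algebra_simps)
  also have "\<dots> = c1 *\<^sub>R (A *v y) + c0 *\<^sub>R y"
    using dual_basis_linear[OF assms(1), of A y] assms(1) unfolding dual_basis_def by metis
  finally show "A *v (A *v y) = c1 *\<^sub>R (A *v y) + c0 *\<^sub>R y" .
qed

section \<open>The diagonal case\<close>

lemma dominant_term_pos:
  fixes a \<beta> c s t :: real
  assumes "c * \<bar>\<beta>\<bar> < a" and "0 \<le> t" "t \<le> s" "0 < s" "0 < c"
  shows "0 < s ^ k * a + \<beta> * t ^ k * c"
proof -
  have "t ^ k * (c * \<bar>\<beta>\<bar>) \<le> s ^ k * (c * \<bar>\<beta>\<bar>)"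
    using assms by (intro mult_right_mono power_mono) auto
  moreover have "s ^ k * (c * \<bar>\<beta>\<bar>) < s ^ k * a" using assms by simp
  moreover have "- (\<beta> * t ^ k * c) \<le> t ^ k * (c * \<bar>\<beta>\<bar>)"
    using assms by (cases "\<beta> \<ge> 0") auto
  ultimately show ?thesis by linarith
qed

text \<open>For a diagonal A with eigenvalues s >= t >= 0, s > 0, on a basis with positive guard
  values, the guard along the orbit of x = a v1 + \<beta> v2 is a s^k b.v1 + \<beta> t^k b.v2, which
  stays positive on the open cone b.v2 |\<beta>| < a b.v1 around v1.\<close>
lemma diagonal_interior:
  assumes basis: "dual_basis v1 v2 p q"
    and e1: "A *v v1 = s *\<^sub>R v1" and e2: "A *v v2 = t *\<^sub>R v2"
    and "0 \<le> t" "t \<le> s" "0 < s"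
    and b1: "0 < b \<bullet> v1" and b2: "0 < b \<bullet> v2"
  shows "v1 \<in> interior (NT A b)"
proof -
  let ?c1 = "b \<bullet> v1" and ?c2 = "b \<bullet> v2"
  let ?U = "{x. 0 < (?c1 *\<^sub>R p - ?c2 *\<^sub>R q) \<bullet> x} \<inter> {x. 0 < (?c1 *\<^sub>R p + ?c2 *\<^sub>R q) \<bullet> x}"
  have "open ?U" by (intro open_Int open_halfspace_gt)
  moreover have "v1 \<in> ?U"
    using basis b1 by (simp add: dual_basis_def inner_diff_left inner_add_left)
  moreover have "?U \<subseteq> NT A b"
  proof
    fix x assume "x \<in> ?U"
    then have cone: "?c2 * \<bar>q \<bullet> x\<bar> < ?c1 * (p \<bullet> x)"
      by (auto simp: inner_diff_left inner_add_left abs_if)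
    have "b \<bullet> (mpow A k *v x) = s ^ k * (?c1 * (p \<bullet> x)) + (q \<bullet> x) * t ^ k * ?c2" for k
    proof -
      have "mpow A k *v x = (p \<bullet> x) *\<^sub>R (mpow A k *v v1) + (q \<bullet> x) *\<^sub>R (mpow A k *v v2)"
        by (rule dual_basis_linear[OF basis])
      then show ?thesis
        by (simp add: mpow_eigenvector[OF e1] mpow_eigenvector[OF e2] inner_add_right)
    qed
    then show "x \<in> NT A b"
      unfolding NT_def using dominant_term_pos[OF cone \<open>0 \<le> t\<close> \<open>t \<le> s\<close> \<open>0 < s\<close> b2] by simp
  qed
  ultimately show ?thesis by (meson interiorI)
qed

section \<open>Matrices preserving the union of two rays\<close>

lemma in_ray: "x \<in> ray v \<longleftrightarrow> (\<exists>k\<ge>0. x = k *\<^sub>R v)"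
  unfolding ray_def by blast

lemma ray_self: "v \<in> ray v"
  unfolding in_ray by (rule exI[of _ 1]) simp

lemma ray_origin: "0 \<in> ray v"
  unfolding in_ray by (rule exI[of _ 0]) simp

text \<open>The case where v1 is an eigenvector: either A is diagonal, or A maps the whole plane
  into the line of v1 and then A^2 = s A.\<close>
lemma eigenvector_case_interior:
  assumes "NT A b \<noteq> {}" and basis: "dual_basis v1 v2 p q"
    and b1: "0 < b \<bullet> v1" and b2: "0 < b \<bullet> v2"
    and e1: "A *v v1 = s *\<^sub>R v1" and "0 \<le> s"
    and A2: "A *v v2 \<in> ray v1 \<union> ray v2"
  shows "v1 \<in> interior (NT A b) \<or> v2 \<in> interior (NT A b)"
proof -
  obtain t where "0 \<le> t" and t: "A *v v2 = t *\<^sub>R v1 \<or> A *v v2 = t *\<^sub>R v2"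
    using A2 by (auto simp: in_ray)
  then consider (diagonal) "A *v v2 = t *\<^sub>R v2" | (rank_one) "A *v v2 = t *\<^sub>R v1" by blast
  then show ?thesis
  proof cases
    case diagonal
    consider "s = 0" "t = 0" | "0 < s" "t \<le> s" | "0 < t" "s \<le> t"
      using \<open>0 \<le> s\<close> \<open>0 \<le> t\<close> by linarith
    then show ?thesis
    proof cases
      case 1
      have "\<forall>y. A *v (A *v y) = 0 *\<^sub>R (A *v y) + 0 *\<^sub>R y"
        by (rule quadratic_relation_from_basis[OF basis]) (simp_all add: e1 diagonal 1)
      then show ?thesis using NT_empty_if_square_zero assms(1) by simp
    next
      case 2
      then show ?thesis using diagonal_interior[OF basis e1 diagonal \<open>0 \<le> t\<close>] b1 b2 by blast
    next
      case 3
      then show ?thesis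
        using diagonal_interior[OF dual_basis_swap[OF basis] diagonal e1 \<open>0 \<le> s\<close>] b1 b2 by blast
    qed
  next
    case rank_one
    have "\<forall>y. A *v (A *v y) = s *\<^sub>R (A *v y) + 0 *\<^sub>R y"
      by (rule quadratic_relation_from_basis[OF basis])
         (simp_all add: e1 rank_one matrix_vector_mult_scaleR)
    moreover from calculation have "0 < s"
      using relation_nondegenerate[OF assms(1)] \<open>0 \<le> s\<close> by fastforce
    ultimately show ?thesis
      using two_step_interior[OF assms(1), of s 0 v1] \<open>0 \<le> s\<close> b1 e1 by simp
  qed
qed

text \<open>Key lemma: if A maps v1 and v2 into the union of their rays, then v1 or v2 is an
  interior point of a nonempty NT.  When A exchanges the two rays, A^2 = s t I.\<close>
lemma invariant_rays_interior:
  assumes "NT A b \<noteq> {}" and basis: "dual_basis v1 v2 p q"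
    and b1: "0 < b \<bullet> v1" and b2: "0 < b \<bullet> v2"
    and A1: "A *v v1 \<in> ray v1 \<union> ray v2" and A2: "A *v v2 \<in> ray v1 \<union> ray v2"
  shows "v1 \<in> interior (NT A b) \<or> v2 \<in> interior (NT A b)"
proof -
  obtain s where "0 \<le> s" and s: "A *v v1 = s *\<^sub>R v1 \<or> A *v v1 = s *\<^sub>R v2"
    using A1 by (auto simp: in_ray)
  obtain t where "0 \<le> t" and t: "A *v v2 = t *\<^sub>R v1 \<or> A *v v2 = t *\<^sub>R v2"
    using A2 by (auto simp: in_ray)
  consider "A *v v1 = s *\<^sub>R v1" | "A *v v2 = t *\<^sub>R v2"
    | (swap) "A *v v1 = s *\<^sub>R v2" "A *v v2 = t *\<^sub>R v1"
    using s t by blast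
  then show ?thesis
  proof cases
    case 1
    then show ?thesis using eigenvector_case_interior assms \<open>0 \<le> s\<close> by blast
  next
    case 2
    then show ?thesis
      using eigenvector_case_interior[OF assms(1) dual_basis_swap[OF basis] b2 b1 _ \<open>0 \<le> t\<close>] A1
      by blast
  next
    case swap
    have "\<forall>y. A *v (A *v y) = 0 *\<^sub>R (A *v y) + (s * t) *\<^sub>R y"
      by (rule quadratic_relation_from_basis[OF basis])
         (simp_all add: swap matrix_vector_mult_scaleR)
    moreover from calculation have "0 < s * t"
      using relation_nondegenerate[OF assms(1)] \<open>0 \<le> s\<close> \<open>0 \<le> t\<close> by fastforce
    ultimately show ?thesis
      using two_step_interior[OF assms(1), of 0 "s * t" v1] \<open>0 \<le> s\<close> \<open>0 \<le> t\<close> b1 b2 swap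
      by (simp add: zero_less_mult_iff)
  qed
qed

theorem lemma3:
  fixes A :: "real^2^2" and b :: "real^2" and v1 v2 :: "real^2"
  assumes "v1 \<noteq> 0" and "v2 \<noteq> 0"
    and "\<not> (\<exists>c>0. v1 = c *\<^sub>R v2)"
    and "frontier (NT A b) = ray v1 \<union> ray v2"
  shows "ray v1 \<subseteq> {x. b \<bullet> x = 0} \<or> ray v2 \<subseteq> {x. b \<bullet> x = 0}"
proof (rule ccontr)
  assume off_line: "\<not> ?thesis"
  have frontier: "v1 \<in> frontier (NT A b)" "v2 \<in> frontier (NT A b)" "0 \<in> frontier (NT A b)"
    using assms(4) ray_self ray_origin by blast+
  have positive: "0 < b \<bullet> v" if "v \<in> frontier (NT A b)" "\<not> ray v \<subseteq> {x. b \<bullet> x = 0}" for v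
    using that closure_NT_nonneg[of v A b] by (fastforce simp: frontier_def in_ray)
  have b1: "0 < b \<bullet> v1" and b2: "0 < b \<bullet> v2"
    using positive frontier off_line by blast+
  have "v1$1 * v2$2 - v1$2 * v2$1 \<noteq> 0"
  proof
    assume "v1$1 * v2$2 - v1$2 * v2$1 = 0"
    then obtain c where c: "v1 = c *\<^sub>R v2" using parallel_if_det_zero assms(2) by blast
    then have "0 < c" using b1 b2 by (simp add: zero_less_mult_iff)
    then show False using c assms(3) by blast
  qed
  then obtain p q where basis: "dual_basis v1 v2 p q" using dual_basis_exists by blast
  have "NT A b \<noteq> {}" using frontier(3) by (auto simp: frontier_def)
  moreover have "A *v v1 \<in> ray v1 \<union> ray v2" "A *v v2 \<in> ray v1 \<union> ray v2"
    using frontier_NT_step b1 b2 frontier assms(4) by auto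
  ultimately have "v1 \<in> interior (NT A b) \<or> v2 \<in> interior (NT A b)"
    using invariant_rays_interior basis b1 b2 by blast
  then show False using frontier by (auto simp: frontier_def)
qed

end
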